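(* Let $q$ be an odd prime power, $n=2^v$ with $v\ge1$, $s$ an odd integer and $t$ an integer with $qt\equiv t\pmod{2^v}$. If Type-I duadic splittings of $\mathbb{Z}_{2^v}$ given by $\rho_{s,t}$ exist, then Type-I duadic splittings of $\mathbb{Z}_{2^v}$ given by $\tau_t=\rho_{1,t}$ exist.
   Context: $\mu_q:\mathbb{Z}_n\to\mathbb{Z}_n$, $i\mapsto qi\bmod n$; $P$ is $\mu_q$-invariant if $\mu_q(P)=P$. $\rho_{s,t}:\mathbb{Z}_n\to\mathbb{Z}_n$, $i\mapsto s(i+t)\bmod n$; $\tau_t(i)=i+t\bmod n$. Type-I duadic splittings of $\mathbb{Z}_n$ given by $\rho_{s,t}$ exist if there is a $\mu_q$-invariant $P$ with $\mathbb{Z}_n=P\cup\rho_{s,t}(P)$ a disjoint union. *)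

theory Defs
  imports "HOL-Computational_Algebra.Primes"
begin

text \<open>Z_n is represented by the residues {0..<n} of int; all maps reduce mod n.\<close>

definition Zn :: "int \<Rightarrow> int set" where
  "Zn n = {0..<n}"

definition mu :: "int \<Rightarrow> int \<Rightarrow> int \<Rightarrow> int" where
  "mu n q i = (q * i) mod n"

definition rho :: "int \<Rightarrow> int \<Rightarrow> int \<Rightarrow> int \<Rightarrow> int" where
  "rho n s t i = (s * (i + t)) mod n"

definition mu_invariant :: "int \<Rightarrow> int \<Rightarrow> int set \<Rightarrow> bool" where
  "mu_invariant n q P \<longleftrightarrow> mu n q ` P = P"

definition typeI_duadic_exists :: "int \<Rightarrow> int \<Rightarrow> int \<Rightarrow> int \<Rightarrow> bool" where
  "typeI_duadic_exists n q s t \<longleftrightarrow>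
     (\<exists>P. P \<subseteq> Zn n \<and> mu_invariant n q P \<and>
          P \<union> rho n s t ` P = Zn n \<and> P \<inter> rho n s t ` P = {})"

definition prime_power :: "int \<Rightarrow> bool" where
  "prime_power q \<longleftrightarrow> (\<exists>p k. prime p \<and> k \<ge> 1 \<and> q = p ^ k)"

end

theory Submission
  imports Defs
begin

text \<open>If kt = t (mod n) and mu_k(P) \<subseteq> P, then rho commutes with mu_k, so no i can satisfy
  rho(i) = mu_k(i): such an i lies neither in P nor in rho(P). Putting i = sj, this rules out
  solutions of (k - s) j = t (mod n); hence, if 2^a exactly divides t, then 2^(a+1) divides
  both 1 - s (take k = 1) and q - s (take k = q), and so q - 1. Now the residues whose
  remainder mod 2^(a+1) is below 2^a form a mu_q-invariant set that tau_t swaps with its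
  complement.\<close>

definition duadic_splitting :: "int \<Rightarrow> int \<Rightarrow> int \<Rightarrow> int set \<Rightarrow> bool" where
  "duadic_splitting n s t P \<longleftrightarrow>
     P \<subseteq> Zn n \<and> P \<union> rho n s t ` P = Zn n \<and> P \<inter> rho n s t ` P = {}"

lemma typeI_duadic_exists_iff:
  "typeI_duadic_exists n q s t \<longleftrightarrow> (\<exists>P. duadic_splitting n s t P \<and> mu_invariant n q P)"
  unfolding typeI_duadic_exists_def duadic_splitting_def by blast

lemma mu_eq_rho_0: "mu n q = rho n q 0"
  by (simp add: fun_eq_iff mu_def rho_def)

lemma mu_1_Zn: "i \<in> Zn n \<Longrightarrow> mu n 1 i = i"
  by (simp add: mu_def Zn_def)

lemma inj_on_rho:
  assumes "coprime s n"
  shows "inj_on (rho n s t) (Zn n)"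
proof
  fix i j assume ij: "i \<in> Zn n" "j \<in> Zn n" and eq: "rho n s t i = rho n s t j"
  have "n dvd s * (i - j)"
    using eq by (simp add: rho_def mod_eq_dvd_iff algebra_simps)
  with assms have "n dvd i - j"
    by (simp add: coprime_commute coprime_dvd_mult_right_iff)
  moreover have "\<bar>i - j\<bar> < n" using ij by (auto simp: Zn_def)
  ultimately show "i = j"
    using dvd_imp_le_int[of "i - j" n] by linarith
qed

lemma rho_mu_commute:
  assumes "(k * t) mod n = t mod n"
  shows "rho n s t (mu n k j) = mu n k (rho n s t j)"
proof -
  have "rho n s t (mu n k j) = (s * (k * j + k * t)) mod n"
    unfolding rho_def mu_def using assms
    by (metis mod_add_left_eq mod_add_right_eq mod_mult_right_eq)
  also have "\<dots> = mu n k (rho n s t j)"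
    unfolding rho_def mu_def by (metis distrib_left mod_mult_right_eq mult.left_commute)
  finally show ?thesis .
qed

lemma duadic_splitting_rho_neq_mu:
  assumes "coprime s n" and P: "duadic_splitting n s t P" and k: "mu n k ` P \<subseteq> P"
    and kt: "(k * t) mod n = t mod n" and i: "i \<in> Zn n"
  shows "rho n s t i \<noteq> mu n k i"
proof
  assume eq: "rho n s t i = mu n k i"
  show False
  proof (cases "i \<in> P")
    case True
    then show False using P k eq unfolding duadic_splitting_def by blast
  next
    case False
    then obtain j where j: "j \<in> P" "i = rho n s t j"
      using P i unfolding duadic_splitting_def by blast
    have "rho n s t (mu n k j) = rho n s t i"
      using rho_mu_commute[OF kt] j eq by simp
    moreover have "mu n k j \<in> P" using j k by blast
    ultimately have "mu n k j = i"
      using inj_on_rho[OF assms(1)] P i unfolding duadic_splitting_def inj_on_def by blast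
    then show False using \<open>mu n k j \<in> P\<close> False by simp
  qed
qed

lemma pow2_exact_divisor:
  fixes t :: int
  assumes "t \<noteq> 0"
  obtains a where "2 ^ a dvd t" and "t mod 2 ^ Suc a = 2 ^ a"
proof -
  obtain u where t: "t = 2 ^ multiplicity 2 t * u" and "odd u"
    using multiplicity_decompose'[OF assms, of 2] by auto
  then have "t mod 2 ^ Suc (multiplicity 2 t) = 2 ^ multiplicity 2 t"
    by (metis mod_mult_mult1 odd_iff_mod_2_eq_one mult.right_neutral power_Suc2)
  then show ?thesis using that multiplicity_dvd by blast
qed

lemma pow2_linear_congruence_solvable:
  fixes x t :: int
  assumes x: "\<not> 2 ^ Suc a dvd x" and t: "2 ^ a dvd t"
  shows "\<exists>i. (x * i) mod 2 ^ v = t mod 2 ^ v"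
proof -
  define c where "c = multiplicity 2 x"
  have "x \<noteq> 0" using x by auto
  then obtain w where xw: "x = 2 ^ c * w" and "odd w"
    using multiplicity_decompose'[of x 2] unfolding c_def by auto
  have "c \<le> a"
    using x multiplicity_dvd'[of "Suc a" 2 x] unfolding c_def by linarith
  obtain u where u: "t = 2 ^ a * u" using t by blast
  have "coprime w (2 ^ v)" using \<open>odd w\<close> by simp
  then obtain \<alpha> \<beta> where \<alpha>\<beta>: "\<alpha> * w + \<beta> * 2 ^ v = 1"
    using bezout_int[of w "2 ^ v"] by auto
  have "x * (\<alpha> * 2 ^ (a - c) * u) = 2 ^ (c + (a - c)) * u * (\<alpha> * w)"
    using xw by (simp add: power_add algebra_simps)
  also have "\<dots> = t * (1 - \<beta> * 2 ^ v)"
    using \<open>c \<le> a\<close> u \<alpha>\<beta> by (simp add: eq_diff_eq)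
  also have "\<dots> = t + (- t * \<beta>) * 2 ^ v" by (simp add: algebra_simps)
  finally show ?thesis by (metis mod_mult_self1)
qed

lemma duadic_splitting_pow2_dvd_diff:
  fixes k s t :: int
  assumes "odd s" and P: "duadic_splitting (2 ^ v) s t P" and k: "mu (2 ^ v) k ` P \<subseteq> P"
    and kt: "(k * t) mod 2 ^ v = t mod 2 ^ v" and t: "2 ^ a dvd t"
  shows "2 ^ Suc a dvd k - s"
proof (rule ccontr)
  assume "\<not> 2 ^ Suc a dvd k - s"
  then obtain j where j: "((k - s) * j) mod 2 ^ v = t mod 2 ^ v"
    using pow2_linear_congruence_solvable t by blast
  define i where "i = (s * j) mod 2 ^ v"
  have "2 ^ v dvd t - (k - s) * j" using j by (simp add: mod_eq_dvd_iff dvd_diff_commute)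
  moreover have "s * (s * j + t) - k * (s * j) = s * (t - (k - s) * j)" by (simp add: algebra_simps)
  ultimately have "2 ^ v dvd s * (s * j + t) - k * (s * j)" by simp
  then have "(s * (s * j + t)) mod 2 ^ v = (k * (s * j)) mod 2 ^ v"
    by (simp add: mod_eq_dvd_iff)
  then have "rho (2 ^ v) s t i = mu (2 ^ v) k i"
    unfolding rho_def mu_def i_def by (metis mod_add_left_eq mod_mult_right_eq)
  moreover have "i \<in> Zn (2 ^ v)" by (simp add: i_def Zn_def)
  moreover have "coprime s (2 ^ v)" using \<open>odd s\<close> by simp
  ultimately show False using duadic_splitting_rho_neq_mu P k kt by blast
qed

lemma add_half_mod_less_iff:
  fixes x h :: int
  assumes "0 < h"
  shows "(x + h) mod (2 * h) < h \<longleftrightarrow> \<not> x mod (2 * h) < h"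
proof -
  define r where "r = x mod (2 * h)"
  have r: "0 \<le> r" "r < 2 * h" using assms by (simp_all add: r_def)
  have "(x + h) mod (2 * h) = (r + h) mod (2 * h)" by (simp add: r_def mod_add_left_eq)
  also have "\<dots> = (if r < h then r + h else r - h)"
  proof (cases "r < h")
    case False
    have "(r + h) mod (2 * h) = (r - h + 2 * h) mod (2 * h)" by (simp add: algebra_simps)
    also have "\<dots> = r - h" using False r by (simp only: mod_add_self2) simp
    finally show ?thesis using False by simp
  qed (use r in simp)
  finally show ?thesis using r unfolding r_def by auto
qed

definition lower_half :: "int \<Rightarrow> int \<Rightarrow> int set" where
  "lower_half n h = {i \<in> Zn n. i mod (2 * h) < h}"

lemma mu_invariant_lower_half:
  assumes n: "2 * h dvd n" and q: "2 * h dvd q - 1" and "coprime q n"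
  shows "mu_invariant n q (lower_half n h)"
  unfolding mu_invariant_def
proof (rule endo_inj_surj)
  show "finite (lower_half n h)"
    by (rule finite_subset[of _ "Zn n"]) (auto simp: lower_half_def Zn_def)
  show "inj_on (mu n q) (lower_half n h)"
    using inj_on_rho[OF \<open>coprime q n\<close>] unfolding mu_eq_rho_0 lower_half_def
    by (rule inj_on_subset) blast
  show "mu n q ` lower_half n h \<subseteq> lower_half n h"
  proof clarify
    fix i assume i: "i \<in> lower_half n h"
    have "2 * h dvd (q - 1) * i" using q by simp
    then have "(q * i) mod (2 * h) = i mod (2 * h)"
      by (simp add: mod_eq_dvd_iff left_diff_distrib)
    then show "mu n q i \<in> lower_half n h"
      using i n by (auto simp: lower_half_def Zn_def mu_def mod_mod_cancel)
  qed
qed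

lemma duadic_splitting_lower_half:
  assumes "0 < h" and n: "2 * h dvd n" and t: "t mod (2 * h) = h"
  shows "duadic_splitting n 1 t (lower_half n h)"
proof -
  let ?Q = "lower_half n h" and ?\<tau> = "rho n 1 t"
  have \<tau>_mod: "?\<tau> i mod (2 * h) = (i + h) mod (2 * h)" for i
  proof -
    have "?\<tau> i mod (2 * h) = (i + t) mod (2 * h)" using n by (simp add: rho_def mod_mod_cancel)
    also have "\<dots> = (i + h) mod (2 * h)" using t by (metis mod_add_right_eq)
    finally show ?thesis .
  qed
  have \<tau>_Q: "?\<tau> i \<in> ?Q \<longleftrightarrow> \<not> i mod (2 * h) < h" if "i \<in> Zn n" for i
    using that add_half_mod_less_iff[OF \<open>0 < h\<close>] \<tau>_mod
    by (auto simp: lower_half_def Zn_def rho_def)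
  have "Zn n \<subseteq> ?Q \<union> ?\<tau> ` ?Q"
  proof
    fix j assume j: "j \<in> Zn n"
    define i where "i = (j - t) mod n"
    have "i \<in> Zn n" using j by (simp add: i_def Zn_def)
    moreover have "?\<tau> i = j" using j by (simp add: i_def rho_def Zn_def mod_add_left_eq)
    ultimately show "j \<in> ?Q \<union> ?\<tau> ` ?Q"
      using \<tau>_Q j by (cases "j \<in> ?Q") (auto simp: lower_half_def)
  qed
  moreover have "?\<tau> ` ?Q \<subseteq> Zn n" by (auto simp: lower_half_def Zn_def rho_def)
  moreover have "?Q \<inter> ?\<tau> ` ?Q = {}" using \<tau>_Q by (auto simp: lower_half_def)
  ultimately show ?thesis by (auto simp: duadic_splitting_def lower_half_def)
qed

lemma duadic_splitting_pow2_valuation: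
  fixes q s t :: int
  assumes "odd s" and P: "duadic_splitting (2 ^ v) s t P" and P_q: "mu (2 ^ v) q ` P \<subseteq> P"
    and qt: "(q * t) mod 2 ^ v = t mod 2 ^ v"
  obtains a where "a < v" and "t mod 2 ^ Suc a = 2 ^ a" and "2 ^ Suc a dvd q - 1"
proof -
  have P_1: "mu (2 ^ v) 1 ` P \<subseteq> P"
    using P mu_1_Zn unfolding duadic_splitting_def image_subset_iff by (metis subsetD)
  have "\<not> 2 ^ v dvd t"
  proof
    assume "2 ^ v dvd t"
    then have "rho (2 ^ v) s t 0 = mu (2 ^ v) 1 0" by (simp add: rho_def mu_def)
    then show False
      using duadic_splitting_rho_neq_mu[OF _ P P_1] \<open>odd s\<close> by (simp add: Zn_def)
  qed
  then have "t \<noteq> 0" by auto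
  then obtain a where "2 ^ a dvd t" and t: "t mod 2 ^ Suc a = 2 ^ a"
    by (rule pow2_exact_divisor)
  have "a < v"
    using \<open>\<not> 2 ^ v dvd t\<close> \<open>2 ^ a dvd t\<close> by (meson dvd_trans le_imp_power_dvd not_less)
  have "2 ^ Suc a dvd 1 - s"
    using duadic_splitting_pow2_dvd_diff[OF \<open>odd s\<close> P P_1 _ \<open>2 ^ a dvd t\<close>] by simp
  moreover have "2 ^ Suc a dvd q - s"
    using duadic_splitting_pow2_dvd_diff[OF \<open>odd s\<close> P P_q qt \<open>2 ^ a dvd t\<close>] .
  ultimately have "2 ^ Suc a dvd q - 1"
    using dvd_diff[of "2 ^ Suc a" "q - s" "1 - s"] by simp
  with \<open>a < v\<close> t show ?thesis by (rule that)
qed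

lemma typeI_duadic_exists_translation_pow2:
  fixes q t :: int
  assumes "a < v" and t: "t mod 2 ^ Suc a = 2 ^ a" and q: "2 ^ Suc a dvd q - 1" and "odd q"
  shows "typeI_duadic_exists (2 ^ v) q 1 t"
proof -
  have n: "2 * 2 ^ a dvd (2 :: int) ^ v"
    using \<open>a < v\<close> le_imp_power_dvd[of "Suc a" v 2] by simp
  have "coprime q (2 ^ v)" using \<open>odd q\<close> by simp
  with n q have "mu_invariant (2 ^ v) q (lower_half (2 ^ v) (2 ^ a))"
    by (intro mu_invariant_lower_half) simp_all
  moreover have "duadic_splitting (2 ^ v) 1 t (lower_half (2 ^ v) (2 ^ a))"
    using n t by (intro duadic_splitting_lower_half) simp_all
  ultimately show ?thesis unfolding typeI_duadic_exists_iff by blast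
qed

theorem lemma3p7:
  fixes q s t :: int and v :: nat
  assumes "prime_power q" and "odd q" and "v \<ge> 1" and "odd s"
    and "(q * t) mod (2 ^ v) = t mod (2 ^ v)"
    and "typeI_duadic_exists (2 ^ v) q s t"
  shows "typeI_duadic_exists (2 ^ v) q 1 t"
proof -
  obtain P where P: "duadic_splitting (2 ^ v) s t P" and "mu_invariant (2 ^ v) q P"
    using assms(6) by (auto simp: typeI_duadic_exists_iff)
  then have "mu (2 ^ v) q ` P \<subseteq> P" by (simp add: mu_invariant_def)
  then obtain a where "a < v" and "t mod 2 ^ Suc a = 2 ^ a" and "2 ^ Suc a dvd q - 1"
    using duadic_splitting_pow2_valuation[OF \<open>odd s\<close> P _ assms(5)] by blast
  with \<open>odd q\<close> show ?thesis by (intro typeI_duadic_exists_translation_pow2)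
qed

end
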